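(* Let $f:\mathbb{Z}^n\to\mathbb{R}\cup\{+\infty\}$ be M-convex with bounded $\operatorname{dom} f$, $\emptyset\neq R\subsetneq N$, and $k$ an integer with $\underline{k}\le k\le\overline{k}$. Let $\hat k<k$ be an integer and $x\in M(\hat k)$. Consider the procedure ConstM-IncSlope$(x)$: set $y:=x$; for each $i\in R$ (each exactly once, arbitrary order) and, for this $i$, for each $j\in N\setminus R$ (each exactly once, arbitrary order), if $f'(y;i,j)=\phi^R(x)$ then set $\lambda:=\min\{k-y(R),\bar c(y;i,j)\}$ and replace $y$ by $y+\lambda(\chi_i-\chi_j)$; finally output $x':=y$. If $x'(R)<k$, then $\phi^R(x')>\phi^R(x)$.
   Context: $N=\{1,\dots,n\}$; $\chi_i\in\{0,1\}^n$ is the $i$-th unit vector; $x(R)=\sum_{i\in R}x(i)$. For $f:\mathbb{Z}^n\to\mathbb{R}\cup\{+\infty\}$, $\operatorname{dom} f=\{x\in\mathbb{Z}^n: f(x)<+\infty\}$. $f$ is M-convex if $\operatorname{dom} f\neq\emptyset$ and for all $x,y\in\operatorname{dom} f$ and every $i$ with $x(i)>y(i)$ there is $j$ with $x(j)<y(j)$ such that $f(x)+f(y)\ge f(x-\chi_i+\chi_j)+f(y+\chi_i-\chi_j)$. $f'(x;i,j)=f(x+\chi_i-\chi_j)-f(x)$ (possibly $+\infty$), $\phi^R(x)=\min_{i\in R,\,j\in N\setminus R}f'(x;i,j)$, and $\bar c(y;i,j)=\max\{\lambda\in\mathbb{Z}_{\ge 0}: f(y+\lambda(\chi_i-\chi_j))-f(y)=\lambda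 f'(y;i,j)\}$. $\underline{k}=\min\{x(R):x\in\operatorname{dom} f\}$, $\overline{k}=\max\{x(R):x\in\operatorname{dom} f\}$; for $\underline{k}\le h\le\overline{k}$, $z(h)=\min\{f(x): x(R)=h,\ x\in\operatorname{dom} f\}$ and $M(h)=\{x\in\operatorname{dom} f: x(R)=h,\ f(x)=z(h)\}$. *)

theory Defs
  imports Complex_Main "HOL-Library.Extended_Real"
begin

text \<open>Vectors in Z^n are functions from a finite index type 'n (playing the role of N) to int.
  Functions f take values in ereal; the codomain R \<union> {+\<infinity>} is imposed by assuming f never equals -\<infinity>.\<close>

definition unitv :: "'n \<Rightarrow> 'n \<Rightarrow> int" where
  "unitv i = (\<lambda>l. if l = i then 1 else 0)"

definition mdom :: "(('n::finite \<Rightarrow> int) \<Rightarrow> ereal) \<Rightarrow> ('n \<Rightarrow> int) set" where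
  "mdom f = {x. f x < \<infinity>}"

definition mconvex :: "(('n::finite \<Rightarrow> int) \<Rightarrow> ereal) \<Rightarrow> bool" where
  "mconvex f \<longleftrightarrow> mdom f \<noteq> {} \<and>
     (\<forall>x\<in>mdom f. \<forall>y\<in>mdom f. \<forall>i. x i > y i \<longrightarrow>
        (\<exists>j. x j < y j \<and>
           f x + f y \<ge> f (\<lambda>l. x l - unitv i l + unitv j l) + f (\<lambda>l. y l + unitv i l - unitv j l)))"

definition fder :: "(('n::finite \<Rightarrow> int) \<Rightarrow> ereal) \<Rightarrow> ('n \<Rightarrow> int) \<Rightarrow> 'n \<Rightarrow> 'n \<Rightarrow> ereal" where
  "fder f x i j = f (\<lambda>l. x l + unitv i l - unitv j l) - f x"

definition phiR :: "(('n::finite \<Rightarrow> int) \<Rightarrow> ereal) \<Rightarrow> 'n set \<Rightarrow> ('n \<Rightarrow> int) \<Rightarrow> ereal" where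
  "phiR f R x = (INF p \<in> R \<times> (UNIV - R). fder f x (fst p) (snd p))"

definition cbar :: "(('n::finite \<Rightarrow> int) \<Rightarrow> ereal) \<Rightarrow> ('n \<Rightarrow> int) \<Rightarrow> 'n \<Rightarrow> 'n \<Rightarrow> int" where
  "cbar f y i j = int (GREATEST lam::nat.
      f (\<lambda>l. y l + int lam * (unitv i l - unitv j l)) - f y = ereal (real lam) * fder f y i j)"

definition kmin :: "(('n::finite \<Rightarrow> int) \<Rightarrow> ereal) \<Rightarrow> 'n set \<Rightarrow> int" where
  "kmin f R = Min ((\<lambda>x. sum x R) ` mdom f)"

definition kmax :: "(('n::finite \<Rightarrow> int) \<Rightarrow> ereal) \<Rightarrow> 'n set \<Rightarrow> int" where
  "kmax f R = Max ((\<lambda>x. sum x R) ` mdom f)"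

definition zval :: "(('n::finite \<Rightarrow> int) \<Rightarrow> ereal) \<Rightarrow> 'n set \<Rightarrow> int \<Rightarrow> ereal" where
  "zval f R h = (INF x \<in> {x \<in> mdom f. sum x R = h}. f x)"

definition Mset :: "(('n::finite \<Rightarrow> int) \<Rightarrow> ereal) \<Rightarrow> 'n set \<Rightarrow> int \<Rightarrow> ('n \<Rightarrow> int) set" where
  "Mset f R h = {x \<in> mdom f. sum x R = h \<and> f x = zval f R h}"

definition incslope_step ::
  "(('n::finite \<Rightarrow> int) \<Rightarrow> ereal) \<Rightarrow> 'n set \<Rightarrow> int \<Rightarrow> ('n \<Rightarrow> int) \<Rightarrow> ('n \<Rightarrow> int) \<Rightarrow> 'n \<times> 'n \<Rightarrow> ('n \<Rightarrow> int)" where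
  "incslope_step f R k x y p =
     (let i = fst p; j = snd p in
      if fder f y i j = phiR f R x then
        (let lam = min (k - sum y R) (cbar f y i j) in (\<lambda>l. y l + lam * (unitv i l - unitv j l)))
      else y)"

text \<open>ConstM-IncSlope(x): the outer loop runs over i along the list is (an enumeration of R),
  the inner loop for this i runs along js i (an enumeration of N - R).\<close>
definition incslope ::
  "(('n::finite \<Rightarrow> int) \<Rightarrow> ereal) \<Rightarrow> 'n set \<Rightarrow> int \<Rightarrow> 'n list \<Rightarrow> ('n \<Rightarrow> 'n list) \<Rightarrow> ('n \<Rightarrow> int) \<Rightarrow> ('n \<Rightarrow> int)" where
  "incslope f R k is js x =
     foldl (incslope_step f R k x) x (concat (map (\<lambda>i. map (\<lambda>j. (i, j)) (js i)) is))"

end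

theory Submission
  imports Defs
begin

text \<open>Let c = phi^R(x); it is finite because x(R) < k \<le> kmax makes some move
  x + chi_i - chi_j with i \<in> R, j \<notin> R feasible. Throughout the procedure the current point y
  keeps phi^R(y) \<ge> c and, as long as y(R) < k, every pair already scanned has slope
  f'(y; i, j) > c. A unit move along a pair of slope exactly c preserves both properties, by the
  exchange axiom applied to y and the point two moves away; strictness survives because the rows
  scanned before i are complete. Along the line y + lambda (chi_i - chi_j) the slopes are
  nondecreasing, so the slope stays c exactly up to cbar(y; i, j): after the pair is processed,
  either y(R) = k or its slope exceeds c. Hence if x'(R) < k, all pairs have slope > c.\<close>

abbreviation move :: "('n \<Rightarrow> int) \<Rightarrow> 'n \<Rightarrow> 'n \<Rightarrow> 'n \<Rightarrow> int" where
  "move y i j \<equiv> (\<lambda>l. y l + unitv i l - unitv j l)"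

definition line :: "('n \<Rightarrow> int) \<Rightarrow> 'n \<Rightarrow> 'n \<Rightarrow> nat \<Rightarrow> 'n \<Rightarrow> int" where
  "line y i j m = (\<lambda>l. y l + int m * (unitv i l - unitv j l))"

lemma line_0 [simp]: "line y i j 0 = y"
  by (simp add: line_def)

lemma move_line: "move (line y i j m) i j = line y i j (Suc m)"
  by (auto simp: line_def algebra_simps)

lemma sum_add_scaled_move:
  fixes y :: "'n::finite \<Rightarrow> int"
  assumes "i \<in> R" "j \<notin> R"
  shows "(\<Sum>l\<in>R. y l + lam * (unitv i l - unitv j l)) = sum y R + lam"
  using assms by (simp add: sum.distrib sum_distrib_left[symmetric] sum_subtractf unitv_def)

lemma sum_line:
  fixes y :: "'n::finite \<Rightarrow> int"
  shows "i \<in> R \<Longrightarrow> j \<notin> R \<Longrightarrow> sum (line y i j m) R = sum y R + int m"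
  unfolding line_def by (rule sum_add_scaled_move)

lemma ereal_add_le_finite:
  fixes a b c :: ereal
  assumes "a + b \<le> c" "c < \<infinity>" "a \<noteq> -\<infinity>" "b \<noteq> -\<infinity>"
  shows "a < \<infinity>" "b < \<infinity>"
  using assms by (cases a; cases b; cases c; auto)+

lemma ereal_exchange_le:
  fixes A B W :: ereal
  assumes "A + B \<le> W + ereal r" "ereal c \<le> A - ereal r" "ereal c \<le> B - ereal r"
  shows "ereal c \<le> W - ereal (r + c)"
  using assms by (cases W; cases A; cases B) auto

lemma ereal_exchange_less:
  fixes A B W :: ereal
  assumes "A + B \<le> W + ereal r" "ereal c \<le> A - ereal r" "ereal c \<le> B - ereal r"
    and "ereal c < A - ereal r \<or> ereal c < B - ereal r"
  shows "ereal c < W - ereal (r + c)"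
  using assms by (cases W; cases A; cases B) auto

lemma slopes_constant:
  fixes g :: "nat \<Rightarrow> real"
  assumes ge: "\<And>m. m < C \<Longrightarrow> c \<le> g (Suc m) - g m" and total: "g C = g 0 + real C * c"
    and "m < C"
  shows "g (Suc m) - g m = c"
proof -
  have "(\<Sum>m<C. g (Suc m) - g m - c) = 0"
    using sum_lessThan_telescope[of g C] total by (simp add: sum_subtractf)
  then have "\<forall>m\<in>{..<C}. g (Suc m) - g m - c = 0"
    by (subst sum_nonneg_eq_0_iff[symmetric]) (use ge in auto)
  then show ?thesis using \<open>m < C\<close> by auto
qed

lemma le_phiR_iff: "t \<le> phiR f R y \<longleftrightarrow> (\<forall>a\<in>R. \<forall>b. b \<notin> R \<longrightarrow> t \<le> fder f y a b)"
  by (auto simp: phiR_def le_INF_iff)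

lemma phiR_le_fder: "a \<in> R \<Longrightarrow> b \<notin> R \<Longrightarrow> phiR f R y \<le> fder f y a b"
  unfolding phiR_def by (rule INF_lower2[of "(a, b)"]) auto

lemma less_phiR_iff:
  assumes "R \<noteq> {}" "R \<noteq> UNIV"
  shows "t < phiR f R y \<longleftrightarrow> (\<forall>a\<in>R. \<forall>b. b \<notin> R \<longrightarrow> t < fder f y a b)"
  unfolding phiR_def using assms by (subst finite_less_Inf_iff) auto

lemma incslope_step_idle:
  assumes "phiR f R x = ereal c" "sum y R \<le> k" "fder f y i j \<noteq> ereal c \<or> sum y R = k"
  shows "incslope_step f R k x y (i, j) = y"
  using assms by (auto simp: incslope_step_def cbar_def)

lemma incslope_step_line:
  assumes "phiR f R x = ereal c" "fder f y i j = ereal c" "sum y R < k"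
  shows "incslope_step f R k x y (i, j) = line y i j (nat (min (k - sum y R) (cbar f y i j)))"
  using assms by (simp add: incslope_step_def line_def cbar_def)

locale mconvex_function =
  fixes f :: "('n::finite \<Rightarrow> int) \<Rightarrow> ereal"
  assumes not_minf: "\<And>y. f y \<noteq> -\<infinity>" and m_convex: "mconvex f"
begin

lemma exchange:
  assumes "x \<in> mdom f" "y \<in> mdom f" "y i < x i"
  obtains j where "x j < y j" "f (move x j i) + f (move y i j) \<le> f x + f y"
proof -
  obtain j where "x j < y j" "f (\<lambda>l. x l - unitv i l + unitv j l) + f (move y i j) \<le> f x + f y"
    using m_convex assms unfolding mconvex_def by blast
  moreover have "(\<lambda>l. x l - unitv i l + unitv j l) = move x j i"
    by (simp add: algebra_simps)
  ultimately show ?thesis using that by simp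
qed

lemma mdom_finite: "y \<in> mdom f \<Longrightarrow> \<exists>r. f y = ereal r"
  using not_minf by (cases "f y") (auto simp: mdom_def)

lemma fder_neq_minf: "y \<in> mdom f \<Longrightarrow> fder f y i j \<noteq> -\<infinity>"
  using mdom_finite[of y] not_minf[of "move y i j"] by (cases "f (move y i j)") (auto simp: fder_def)

lemma fder_less_top_iff: "y \<in> mdom f \<Longrightarrow> fder f y i j < \<infinity> \<longleftrightarrow> move y i j \<in> mdom f"
  using mdom_finite[of y] not_minf[of "move y i j"]
  by (cases "f (move y i j)") (auto simp: fder_def mdom_def)

text \<open>The point two moves away exceeds \<open>y\<close> at \<open>i\<close>, so the exchange axiom pairs \<open>i\<close> with one
  of the two coordinates where it is below \<open>y\<close>, namely \<open>j\<close> or \<open>b\<close>.\<close>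
lemma exchange_two_moves:
  assumes y: "y \<in> mdom f" and "i \<in> R" "a \<in> R" "j \<notin> R" "b \<notin> R"
  shows "f (move y a b) + f (move y i j) \<le> f (move (move y i j) a b) + f y \<or>
         f (move y a j) + f (move y i b) \<le> f (move (move y i j) a b) + f y"
proof (cases "move (move y i j) a b \<in> mdom f")
  case False
  then show ?thesis using not_minf[of y] by (auto simp: mdom_def)
next
  case W: True
  have "y i < move (move y i j) a b i" using assms by (auto simp: unitv_def)
  then obtain l where l: "move (move y i j) a b l < y l"
    "f (move (move (move y i j) a b) l i) + f (move y i l) \<le> f (move (move y i j) a b) + f y"
    using exchange[OF W y] by blast
  have "l = j \<or> l = b" using l(1) by (auto simp: unitv_def split: if_splits)
  moreover have "move (move (move y i j) a b) j i = move y a b"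
    and "move (move (move y i j) a b) b i = move y a j"
    by (simp_all add: fun_eq_iff)
  ultimately show ?thesis using l(2) by auto
qed

lemma phiR_ge_after_min_move:
  assumes y: "y \<in> mdom f" and iR: "i \<in> R" and jR: "j \<notin> R"
    and ge: "ereal c \<le> phiR f R y" and slope: "fder f y i j = ereal c"
  shows "ereal c \<le> phiR f R (move y i j)"
  unfolding le_phiR_iff
proof (intro ballI allI impI)
  fix a b assume ab: "a \<in> R" "b \<notin> R"
  obtain r where r: "f y = ereal r" using mdom_finite[OF y] by blast
  have fmove: "f (move y i j) = ereal (r + c)"
    using slope r by (cases "f (move y i j)") (auto simp: fder_def)
  have ge': "ereal c \<le> f (move y a' b') - ereal r" if "a' \<in> R" "b' \<notin> R" for a' b'
    using ge that by (simp add: le_phiR_iff fder_def r)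
  have "ereal c \<le> f (move (move y i j) a b) - ereal (r + c)"
    using exchange_two_moves[OF y iR ab(1) jR ab(2)] unfolding r
    by (elim disjE) (erule ereal_exchange_le; use ge' ab iR jR fmove in auto)+
  then show "ereal c \<le> fder f (move y i j) a b" by (simp add: fder_def fmove)
qed

lemma fder_gt_after_min_move:
  assumes y: "y \<in> mdom f" and iR: "i \<in> R" and jR: "j \<notin> R" and aR: "a \<in> R" and bR: "b \<notin> R"
    and ge: "ereal c \<le> phiR f R y" and slope: "fder f y i j = ereal c"
    and gt: "ereal c < fder f y a b" and gt_row: "a \<noteq> i \<Longrightarrow> ereal c < fder f y a j"
  shows "ereal c < fder f (move y i j) a b"
proof -
  obtain r where r: "f y = ereal r" using mdom_finite[OF y] by blast
  have fmove: "f (move y i j) = ereal (r + c)"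
    using slope r by (cases "f (move y i j)") (auto simp: fder_def)
  have ge': "ereal c \<le> f (move y a' b') - ereal r" if "a' \<in> R" "b' \<notin> R" for a' b'
    using ge that by (simp add: le_phiR_iff fder_def r)
  have "ereal c < f (move (move y i j) a b) - ereal (r + c)"
    using exchange_two_moves[OF y iR aR jR bR] unfolding r
    by (elim disjE) (erule ereal_exchange_less;
        use ge' gt gt_row aR bR iR jR fmove in \<open>auto simp: fder_def r\<close>)+
  then show ?thesis by (simp add: fder_def fmove)
qed

lemma line_exchange:
  assumes ij: "i \<noteq> j" and ab: "a < b"
    and a: "line y i j a \<in> mdom f" and b: "line y i j b \<in> mdom f"
  shows "f (line y i j (b - 1)) + f (line y i j (a + 1)) \<le> f (line y i j b) + f (line y i j a)"
proof -
  have "line y i j a i < line y i j b i" using ij ab by (simp add: line_def unitv_def)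
  then obtain l where l: "line y i j b l < line y i j a l"
    "f (move (line y i j b) l i) + f (move (line y i j a) i l) \<le> f (line y i j b) + f (line y i j a)"
    using exchange[OF b a] by blast
  have "l = j" using l(1) ab by (auto simp: line_def unitv_def split: if_splits)
  moreover have "move (line y i j b) j i = line y i j (b - 1)"
    using ab ij by (auto simp: line_def unitv_def of_nat_diff algebra_simps)
  moreover have "move (line y i j a) i j = line y i j (a + 1)"
    by (simp add: move_line)
  ultimately show ?thesis using l(2) by simp
qed

lemma line_in_mdom:
  assumes ij: "i \<noteq> j"
  shows "line y i j a \<in> mdom f \<Longrightarrow> line y i j b \<in> mdom f \<Longrightarrow> a \<le> m \<Longrightarrow> m \<le> b
    \<Longrightarrow> line y i j m \<in> mdom f"
proof (induction "b - a" arbitrary: a b rule: less_induct)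
  case less
  show ?case
  proof (cases "m = a \<or> m = b")
    case True
    then show ?thesis using less by auto
  next
    case False
    then have am: "a < m" and mb: "m < b" using less by auto
    have "f (line y i j (b - 1)) + f (line y i j (a + 1)) \<le> f (line y i j b) + f (line y i j a)"
      using line_exchange[OF ij _ less(2,3)] am mb by simp
    moreover have "f (line y i j b) + f (line y i j a) < \<infinity>"
      using less(2,3) by (auto simp: mdom_def)
    ultimately have "line y i j (b - 1) \<in> mdom f" "line y i j (a + 1) \<in> mdom f"
      using ereal_add_le_finite not_minf by (auto simp: mdom_def)
    then show ?thesis using less(1)[of "b - 1" "a + 1"] am mb by auto
  qed
qed

text \<open>If \<open>z(R) > x(R)\<close>, exchange \<open>z\<close> with \<open>x\<close> at a coordinate \<open>i \<in> R\<close> where \<open>z\<close> exceeds \<open>x\<close>: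
  either the partner lies outside \<open>R\<close> and the move from \<open>x\<close> is feasible, or the exchanged \<open>z\<close> is
  closer to \<open>x\<close> with the same value on \<open>R\<close>.\<close>
lemma exists_move_in_mdom:
  assumes x: "x \<in> mdom f"
  shows "z \<in> mdom f \<Longrightarrow> sum x R < sum z R \<Longrightarrow> \<exists>i\<in>R. \<exists>j. j \<notin> R \<and> move x i j \<in> mdom f"
proof (induction "nat (\<Sum>l\<in>UNIV. \<bar>z l - x l\<bar>)" arbitrary: z rule: less_induct)
  case less
  obtain i where iR: "i \<in> R" and zi: "x i < z i"
    using less(3) sum_mono[of R z x] by force
  obtain j where zj: "z j < x j" and le: "f (move z j i) + f (move x i j) \<le> f z + f x"
    using exchange[OF less(2) x zi] by blast
  have "f z + f x < \<infinity>" using less(2) x by (auto simp: mdom_def)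
  then have z': "move z j i \<in> mdom f" and x': "move x i j \<in> mdom f"
    using ereal_add_le_finite[OF le] not_minf by (auto simp: mdom_def)
  show ?case
  proof (cases "j \<in> R")
    case False
    then show ?thesis using iR x' by blast
  next
    case True
    have ij: "i \<noteq> j" using zi zj by auto
    have "sum (move z j i) R = sum z R"
      using True iR by (simp add: sum.distrib sum_subtractf unitv_def)
    moreover have "(\<Sum>l\<in>UNIV. \<bar>move z j i l - x l\<bar>) < (\<Sum>l\<in>UNIV. \<bar>z l - x l\<bar>)"
    proof (rule sum_strict_mono_ex1)
      show "\<forall>l\<in>UNIV. \<bar>move z j i l - x l\<bar> \<le> \<bar>z l - x l\<bar>"
        using zi zj ij by (auto simp: unitv_def)
      show "\<exists>l\<in>UNIV. \<bar>move z j i l - x l\<bar> < \<bar>z l - x l\<bar>"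
        using zi ij by (auto simp: unitv_def intro!: bexI[of _ i])
    qed simp
    then have "nat (\<Sum>l\<in>UNIV. \<bar>move z j i l - x l\<bar>) < nat (\<Sum>l\<in>UNIV. \<bar>z l - x l\<bar>)"
      using sum_nonneg[of UNIV "\<lambda>l. \<bar>move z j i l - x l\<bar>"] by linarith
    ultimately show ?thesis using less(1)[OF _ z'] less(3) by simp
  qed
qed

end

locale bounded_mconvex_function = mconvex_function +
  assumes bounded_mdom: "\<exists>B. \<forall>y\<in>mdom f. \<forall>l. \<bar>y l\<bar> \<le> B"
begin

lemma kmax_attained:
  obtains z where "z \<in> mdom f" "sum z R = kmax f R"
proof -
  obtain B where B: "\<forall>y\<in>mdom f. \<forall>l. \<bar>y l\<bar> \<le> B" using bounded_mdom by blast
  have "(\<lambda>y. sum y R) ` mdom f \<subseteq> {- (int (card R) * B) .. int (card R) * B}"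
  proof (rule image_subsetI)
    fix y assume y: "y \<in> mdom f"
    have "(\<Sum>l\<in>R. - B) \<le> sum y R"
      by (rule sum_mono) (use B[rule_format, OF y] in \<open>metis abs_le_D2 minus_le_iff\<close>)
    moreover have "sum y R \<le> (\<Sum>l\<in>R. B)"
      by (rule sum_mono) (use B[rule_format, OF y] in \<open>metis abs_le_D1\<close>)
    ultimately show "sum y R \<in> {- (int (card R) * B) .. int (card R) * B}" by simp
  qed
  then have "finite ((\<lambda>y. sum y R) ` mdom f)" by (rule finite_subset) simp
  moreover have "mdom f \<noteq> {}" using m_convex by (simp add: mconvex_def)
  ultimately have "kmax f R \<in> (\<lambda>y. sum y R) ` mdom f" unfolding kmax_def by (intro Max_in) auto
  then show ?thesis using that by (metis imageE)
qed

lemma phiR_finite_below_kmax: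
  assumes x: "x \<in> mdom f" and below: "sum x R < kmax f R"
  obtains c where "phiR f R x = ereal c"
proof -
  obtain z where z: "z \<in> mdom f" "sum z R = kmax f R" by (rule kmax_attained)
  then obtain i j where iR: "i \<in> R" and jR: "j \<notin> R" and move: "move x i j \<in> mdom f"
    using exists_move_in_mdom[OF x z(1), of R] below by auto
  have "phiR f R x \<le> fder f x i j" using iR jR by (rule phiR_le_fder)
  also have "\<dots> < \<infinity>" using fder_less_top_iff[OF x] move by simp
  finally have "phiR f R x < \<infinity>" .
  moreover have "-\<infinity> < phiR f R x"
    using iR jR fder_neq_minf[OF x] by (subst less_phiR_iff) auto
  ultimately show ?thesis using that by (cases "phiR f R x") auto
qed

context
  fixes y i j and c :: real
  assumes y: "y \<in> mdom f" and ij: "i \<noteq> j" and slope: "fder f y i j = ereal c"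
begin

lemma cbar_greatest:
  shows cbar_linear: "f (line y i j (nat (cbar f y i j))) - f y = ereal (real (nat (cbar f y i j)) * c)"
    and cbar_maximal: "f (line y i j m) - f y = ereal (real m * c) \<Longrightarrow> m \<le> nat (cbar f y i j)"
proof -
  obtain B where B: "\<forall>z\<in>mdom f. \<forall>l. \<bar>z l\<bar> \<le> B" using bounded_mdom by blast
  obtain r where r: "f y = ereal r" using mdom_finite[OF y] by blast
  define P where "P m \<longleftrightarrow> f (line y i j m) - f y = ereal (real m * c)" for m
  have cbar: "nat (cbar f y i j) = Greatest P"
    unfolding cbar_def P_def[abs_def] by (simp add: line_def slope)
  have P0: "P 0" by (simp add: P_def r)
  \<comment> \<open>Without a bounded domain the \<open>GREATEST\<close> in the definition of \<open>cbar\<close> could be junk.\<close>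
  have bound: "m \<le> nat (B - y i)" if "P m" for m
  proof -
    have "line y i j m \<in> mdom f"
      using that r by (cases "f (line y i j m)") (auto simp: P_def mdom_def)
    then have "\<bar>line y i j m i\<bar> \<le> B" using B by blast
    then show ?thesis using ij by (simp add: line_def unitv_def)
  qed
  show "f (line y i j (nat (cbar f y i j))) - f y = ereal (real (nat (cbar f y i j)) * c)"
    using GreatestI_nat[of P 0, OF P0 bound] by (simp add: cbar P_def)
  show "m \<le> nat (cbar f y i j)" if "f (line y i j m) - f y = ereal (real m * c)"
    using Greatest_le_nat[of P m, OF _ bound] that by (simp add: cbar P_def)
qed

lemma line_in_mdom_upto_cbar: "m \<le> nat (cbar f y i j) \<Longrightarrow> line y i j m \<in> mdom f"
proof -
  assume "m \<le> nat (cbar f y i j)"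
  moreover have "line y i j (nat (cbar f y i j)) \<in> mdom f"
    using cbar_linear mdom_finite[OF y] by (cases "f (line y i j (nat (cbar f y i j)))") (auto simp: mdom_def)
  ultimately show ?thesis using line_in_mdom[OF ij, of y 0] y by simp
qed

text \<open>By the exchange axiom the slopes of \<open>f\<close> along the line are nondecreasing; the first one is
  \<open>c\<close> and the first \<open>cbar\<close> of them sum to \<open>cbar * c\<close>, so they all equal \<open>c\<close>.\<close>
lemma fder_line_below_cbar:
  assumes m: "m < nat (cbar f y i j)"
  shows "fder f (line y i j m) i j = ereal c"
proof -
  let ?C = "nat (cbar f y i j)"
  define g where "g m = real_of_ereal (f (line y i j m))" for m
  have f_g: "f (line y i j m) = ereal (g m)" if "m \<le> ?C" for m
    using mdom_finite[OF line_in_mdom_upto_cbar[OF that]] by (auto simp: g_def)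
  have fder_g: "fder f (line y i j m) i j = ereal (g (Suc m) - g m)" if "m < ?C" for m
    using f_g[of m] f_g[of "Suc m"] that by (simp add: fder_def move_line)
  have mono: "g (Suc t) - g t \<le> g (Suc s) - g s" if "t < s" "s < ?C" for t s
    using line_exchange[OF ij, of t "Suc s" y] line_in_mdom_upto_cbar
      f_g[of s] f_g[of "Suc t"] f_g[of "Suc s"] f_g[of t] that
    by simp
  have "c \<le> g (Suc t) - g t" if "t < ?C" for t
    using mono[of 0 t] fder_g[of 0] slope that by (cases "t = 0") auto
  moreover have "g ?C = g 0 + real ?C * c"
    using cbar_linear f_g[of ?C] f_g[of 0] by simp
  ultimately have "g (Suc m) - g m = c" using m by (rule slopes_constant)
  then show ?thesis using fder_g[OF m] by simp
qed

lemma fder_line_at_cbar: "fder f (line y i j (nat (cbar f y i j))) i j \<noteq> ereal c"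
proof
  let ?C = "nat (cbar f y i j)"
  assume "fder f (line y i j ?C) i j = ereal c"
  then have "f (line y i j (Suc ?C)) - f (line y i j ?C) = ereal c"
    by (simp add: fder_def move_line)
  moreover obtain r where r: "f y = ereal r" using mdom_finite[OF y] by blast
  moreover have "f (line y i j ?C) = ereal (r + real ?C * c)"
    using cbar_linear r by (cases "f (line y i j ?C)") auto
  ultimately have "f (line y i j (Suc ?C)) - f y = ereal (real (Suc ?C) * c)"
    by (cases "f (line y i j (Suc ?C))") (auto simp: algebra_simps)
  then show False using cbar_maximal by fastforce
qed

lemma slopes_along_line:
  assumes iR: "i \<in> R" and jR: "j \<notin> R" and ge: "ereal c \<le> phiR f R y"
    and gt: "\<And>a b. (a, b) \<in> P \<Longrightarrow> ereal c < fder f y a b"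
    and P: "P \<subseteq> R \<times> - R" and closed: "\<And>a b. (a, b) \<in> P \<Longrightarrow> a \<noteq> i \<Longrightarrow> (a, j) \<in> P"
  shows "m \<le> nat (cbar f y i j) \<Longrightarrow>
    ereal c \<le> phiR f R (line y i j m) \<and> (\<forall>(a, b)\<in>P. ereal c < fder f (line y i j m) a b)"
proof (induction m)
  case 0
  then show ?case using ge gt by auto
next
  case (Suc m)
  then have m: "m < nat (cbar f y i j)" by simp
  with Suc.IH have ge_m: "ereal c \<le> phiR f R (line y i j m)"
    and gt_m: "\<And>a b. (a, b) \<in> P \<Longrightarrow> ereal c < fder f (line y i j m) a b" by auto
  note dom_m = line_in_mdom_upto_cbar[OF less_imp_le[OF m]]
  note slope_m = fder_line_below_cbar[OF m]
  have "ereal c \<le> phiR f R (line y i j (Suc m))"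
    unfolding move_line[symmetric] using phiR_ge_after_min_move[OF dom_m iR jR ge_m slope_m] .
  moreover have "ereal c < fder f (line y i j (Suc m)) a b" if "(a, b) \<in> P" for a b
    unfolding move_line[symmetric]
    using fder_gt_after_min_move[OF dom_m iR jR _ _ ge_m slope_m] P closed gt_m that by blast
  ultimately show ?case by blast
qed

end

text \<open>\<open>P\<close> collects the pairs the procedure has already scanned.\<close>
definition slope_invariant where
  "slope_invariant R k (c :: real) P y \<longleftrightarrow> y \<in> mdom f \<and> sum y R \<le> k \<and> ereal c \<le> phiR f R y \<and>
     (sum y R < k \<longrightarrow> (\<forall>(a, b)\<in>P. ereal c < fder f y a b))"

lemma incslope_step_invariant:
  assumes phi: "phiR f R x = ereal c" and inv: "slope_invariant R k c P y"
    and P: "P \<subseteq> R \<times> - R" and iR: "i \<in> R" and jR: "j \<notin> R"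
    and closed: "\<And>a b. (a, b) \<in> P \<Longrightarrow> a \<noteq> i \<Longrightarrow> (a, j) \<in> P"
  shows "slope_invariant R k c (insert (i, j) P) (incslope_step f R k x y (i, j))"
proof -
  have y: "y \<in> mdom f" and le_k: "sum y R \<le> k" and ge: "ereal c \<le> phiR f R y"
    using inv by (auto simp: slope_invariant_def)
  have ij: "i \<noteq> j" using iR jR by auto
  show ?thesis
  proof (cases "fder f y i j = ereal c \<and> sum y R < k")
    case False
    then have "incslope_step f R k x y (i, j) = y"
      using le_k by (intro incslope_step_idle[OF phi le_k]) auto
    moreover have "sum y R < k \<Longrightarrow> ereal c < fder f y i j"
      using False order_trans[OF ge phiR_le_fder[OF iR jR]] by (auto simp: order_le_less)
    ultimately show ?thesis using inv by (auto simp: slope_invariant_def)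
  next
    case True
    then have slope: "fder f y i j = ereal c" and below: "sum y R < k" by auto
    define m where "m = nat (min (k - sum y R) (cbar f y i j))"
    have step: "incslope_step f R k x y (i, j) = line y i j m"
      unfolding m_def by (rule incslope_step_line[OF phi slope below])
    have m_le: "m \<le> nat (cbar f y i j)" by (simp add: m_def nat_mono)
    have sum_m: "sum (line y i j m) R = sum y R + int m" by (rule sum_line[OF iR jR])
    have gt: "ereal c < fder f y a b" if "(a, b) \<in> P" for a b
      using inv below that by (auto simp: slope_invariant_def)
    have slopes: "ereal c \<le> phiR f R (line y i j m)"
        "\<forall>(a, b)\<in>P. ereal c < fder f (line y i j m) a b"
      using slopes_along_line[OF y ij slope iR jR ge gt P closed m_le] by auto
    have "ereal c < fder f (line y i j m) i j" if "sum (line y i j m) R < k"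
    proof -
      have "m = nat (cbar f y i j)" using that sum_m below by (auto simp: m_def min_def)
      then have "fder f (line y i j m) i j \<noteq> ereal c" using fder_line_at_cbar[OF y ij slope] by simp
      then show ?thesis using order_trans[OF slopes(1) phiR_le_fder[OF iR jR]] by (simp add: order_le_less)
    qed
    moreover have "sum (line y i j m) R \<le> k" using sum_m below by (auto simp: m_def min_def)
    ultimately show ?thesis
      unfolding step slope_invariant_def
      using line_in_mdom_upto_cbar[OF y ij slope m_le] slopes by auto
  qed
qed

lemma incslope_row_invariant:
  assumes phi: "phiR f R x = ereal c" and iR: "i \<in> R" and "set bs \<subseteq> - R"
    and "slope_invariant R k c P y" and "P \<subseteq> R \<times> - R"
    and "\<And>a b b'. (a, b) \<in> P \<Longrightarrow> a \<noteq> i \<Longrightarrow> b' \<notin> R \<Longrightarrow> (a, b') \<in> P"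
  shows "slope_invariant R k c (P \<union> {i} \<times> set bs)
    (foldl (incslope_step f R k x) y (map (\<lambda>j. (i, j)) bs))"
  using assms(3-)
proof (induction bs arbitrary: y P)
  case Nil
  then show ?case by simp
next
  case (Cons b bs)
  have step: "slope_invariant R k c (insert (i, b) P) (incslope_step f R k x y (i, b))"
    using incslope_step_invariant[OF phi Cons.prems(2,3) iR] Cons.prems(1,4) by auto
  have "slope_invariant R k c (insert (i, b) P \<union> {i} \<times> set bs)
      (foldl (incslope_step f R k x) (incslope_step f R k x y (i, b)) (map (\<lambda>j. (i, j)) bs))"
    by (rule Cons.IH[OF _ step]) (use Cons.prems iR in auto)
  moreover have "insert (i, b) P \<union> {i} \<times> set bs = P \<union> {i} \<times> set (b # bs)" by auto
  ultimately show ?case by simp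
qed

lemma incslope_invariant:
  assumes phi: "phiR f R x = ereal c" and js: "\<And>i. i \<in> R \<Longrightarrow> set (js i) = - R"
    and "set is \<subseteq> R" and "slope_invariant R k c P y" and "P \<subseteq> R \<times> - R"
    and "\<And>a b b'. (a, b) \<in> P \<Longrightarrow> b' \<notin> R \<Longrightarrow> (a, b') \<in> P"
  shows "slope_invariant R k c (P \<union> set is \<times> - R)
    (foldl (incslope_step f R k x) y (concat (map (\<lambda>i. map (\<lambda>j. (i, j)) (js i)) is)))"
  using assms(3-)
proof (induction "is" arbitrary: y P)
  case Nil
  then show ?case by simp
next
  case (Cons i "is")
  then have iR: "i \<in> R" by simp
  have row: "slope_invariant R k c (P \<union> {i} \<times> - R)
      (foldl (incslope_step f R k x) y (map (\<lambda>j. (i, j)) (js i)))"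
    unfolding js[OF iR, symmetric]
    by (rule incslope_row_invariant[OF phi iR]) (use Cons.prems js[OF iR] in auto)
  have "slope_invariant R k c (P \<union> {i} \<times> - R \<union> set is \<times> - R)
      (foldl (incslope_step f R k x) (foldl (incslope_step f R k x) y (map (\<lambda>j. (i, j)) (js i)))
        (concat (map (\<lambda>i. map (\<lambda>j. (i, j)) (js i)) is)))"
    by (rule Cons.IH[OF _ row]) (use Cons.prems in auto)
  moreover have "P \<union> {i} \<times> - R \<union> set is \<times> - R = P \<union> set (i # is) \<times> - R" by auto
  ultimately show ?case by simp
qed

end

theorem mainTheorem12:
  fixes f :: "('n::finite \<Rightarrow> int) \<Rightarrow> ereal"
    and R :: "'n set" and k khat :: int and x :: "'n \<Rightarrow> int"
    and "is" :: "'n list" and js :: "'n \<Rightarrow> 'n list"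
  assumes noninf: "\<forall>y. f y \<noteq> -\<infinity>"
    and mconv: "mconvex f"
    and bdd: "\<exists>B. \<forall>y\<in>mdom f. \<forall>l. \<bar>y l\<bar> \<le> B"
    and Rne: "R \<noteq> {}" and Rproper: "R \<noteq> UNIV"
    and klo: "kmin f R \<le> k" and khi: "k \<le> kmax f R"
    and khat: "khat < k"
    and xM: "x \<in> Mset f R khat"
    and is_enum: "distinct is" "set is = R"
    and js_enum: "\<forall>i\<in>R. distinct (js i) \<and> set (js i) = UNIV - R"
    and small: "sum (incslope f R k is js x) R < k"
  shows "phiR f R (incslope f R k is js x) > phiR f R x"
proof -
  interpret bounded_mconvex_function f
    using noninf mconv bdd by unfold_locales auto
  have x: "x \<in> mdom f" and below: "sum x R < k"
    using xM khat by (auto simp: Mset_def)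
  obtain c where phi: "phiR f R x = ereal c"
    using phiR_finite_below_kmax[OF x, where R = R] below khi by fastforce
  have init: "slope_invariant R k c {} x"
    using x below phi by (simp add: slope_invariant_def)
  have "slope_invariant R k c ({} \<union> set is \<times> - R) (incslope f R k is js x)"
    unfolding incslope_def
    by (rule incslope_invariant[OF phi _ _ init]) (use is_enum js_enum in \<open>auto simp: Compl_eq_Diff_UNIV\<close>)
  then have "\<forall>a\<in>R. \<forall>b. b \<notin> R \<longrightarrow> ereal c < fder f (incslope f R k is js x) a b"
    using small is_enum by (auto simp: slope_invariant_def)
  then show ?thesis using phi less_phiR_iff[OF Rne Rproper] by simp
qed

end
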